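(* Let $X$ take values in $\{x_1,\dots,x_K\}$ and $Y$ in $\{y_1,\dots,y_K\}$ with a fixed joint distribution $p(X,Y)$, and let $Y_N\in\{1,\dots,N\}$ be a quantization of $Y$ given by a conditional probability $q_{\nu k}=q(Y_N=\nu\mid Y=y_k)$, $q\in\Delta$. Fix $I_0>0$. Then any solution $q^*$ of the problem $$\max_{q\in\Delta} -I(Y;Y_N)\quad\text{subject to}\quad I(X;Y_N)\ge I_0,$$ and any solution $q^*$ of the problem $$\max_{q\in\Delta} H(Y_N\mid Y)\quad\text{subject to}\quad I(X;Y_N)\ge I_0,$$ satisfies the constraint with equality: $I(X;Y_N)=I_0$ at $q=q^*$.
   Context: $\Delta$ is the set of all $q=(q_{\nu k})_{\nu\le N,\,k\le K}$ with $q_{\nu k}\ge 0$ and $\sum_{\nu=1}^N q_{\nu k}=1$ for each $k$. The quantizer induces the joint distributions $p(Y_N=\nu, Y=y_k)=q_{\nu k}p(y_k)$ and $p(X=x, Y_N=\nu)=\sum_k q_{\nu k}p(x,y_k)$ (i.e. $X\to Y\to Y_N$ is Markov). $I(\cdot;\cdot)$ denotes mutual information and $H(Y_N\mid Y)=-\sum_k p(y_k)\sum_\nu q_{\nu k}\log q_{\nu k}$ the conditional entropy; all are regarded as functions of $q$. *)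

theory Defs
  imports Complex_Main
begin

text \<open>Indices: X and Y take values x_1..x_K and y_1..y_K, encoded by i, k in {1..K};
  the quantizer output Y_N takes values nu in {1..N}.
  p i k = p(X = x_i, Y = y_k);  q nu k = q(Y_N = nu | Y = y_k).\<close>

definition xlog :: "real \<Rightarrow> real \<Rightarrow> real" where
  "xlog a b = (if a = 0 then 0 else a * ln (a / b))"

definition Delta :: "nat \<Rightarrow> nat \<Rightarrow> (nat \<Rightarrow> nat \<Rightarrow> real) set" where
  "Delta N K = {q. (\<forall>\<nu>\<in>{1..N}. \<forall>k\<in>{1..K}. q \<nu> k \<ge> 0) \<and>
                   (\<forall>k\<in>{1..K}. (\<Sum>\<nu>=1..N. q \<nu> k) = 1)}"

definition is_joint_dist :: "nat \<Rightarrow> (nat \<Rightarrow> nat \<Rightarrow> real) \<Rightarrow> bool" where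
  "is_joint_dist K p \<longleftrightarrow> (\<forall>i\<in>{1..K}. \<forall>k\<in>{1..K}. p i k \<ge> 0) \<and>
                           (\<Sum>i=1..K. \<Sum>k=1..K. p i k) = 1"

definition pX :: "nat \<Rightarrow> (nat \<Rightarrow> nat \<Rightarrow> real) \<Rightarrow> nat \<Rightarrow> real" where
  "pX K p i = (\<Sum>k=1..K. p i k)"

definition pY :: "nat \<Rightarrow> (nat \<Rightarrow> nat \<Rightarrow> real) \<Rightarrow> nat \<Rightarrow> real" where
  "pY K p k = (\<Sum>i=1..K. p i k)"

definition pYN :: "nat \<Rightarrow> (nat \<Rightarrow> nat \<Rightarrow> real) \<Rightarrow> (nat \<Rightarrow> nat \<Rightarrow> real) \<Rightarrow> nat \<Rightarrow> real" where
  "pYN K p q \<nu> = (\<Sum>k=1..K. q \<nu> k * pY K p k)"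

definition pXYN :: "nat \<Rightarrow> (nat \<Rightarrow> nat \<Rightarrow> real) \<Rightarrow> (nat \<Rightarrow> nat \<Rightarrow> real) \<Rightarrow> nat \<Rightarrow> nat \<Rightarrow> real" where
  "pXYN K p q i \<nu> = (\<Sum>k=1..K. q \<nu> k * p i k)"

definition MI_X_YN :: "nat \<Rightarrow> nat \<Rightarrow> (nat \<Rightarrow> nat \<Rightarrow> real) \<Rightarrow> (nat \<Rightarrow> nat \<Rightarrow> real) \<Rightarrow> real" where
  "MI_X_YN N K p q = (\<Sum>i=1..K. \<Sum>\<nu>=1..N.
       xlog (pXYN K p q i \<nu>) (pX K p i * pYN K p q \<nu>))"

text \<open>I(Y;Y_N), with p(Y_N = nu, Y = y_k) = q nu k p(y_k)\<close>
definition MI_Y_YN :: "nat \<Rightarrow> nat \<Rightarrow> (nat \<Rightarrow> nat \<Rightarrow> real) \<Rightarrow> (nat \<Rightarrow> nat \<Rightarrow> real) \<Rightarrow> real" where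
  "MI_Y_YN N K p q = (\<Sum>k=1..K. \<Sum>\<nu>=1..N.
       xlog (q \<nu> k * pY K p k) (pY K p k * pYN K p q \<nu>))"

definition CondH_YN_Y :: "nat \<Rightarrow> nat \<Rightarrow> (nat \<Rightarrow> nat \<Rightarrow> real) \<Rightarrow> (nat \<Rightarrow> nat \<Rightarrow> real) \<Rightarrow> real" where
  "CondH_YN_Y N K p q = - (\<Sum>k=1..K. pY K p k * (\<Sum>\<nu>=1..N. xlog (q \<nu> k) 1))"

definition is_solution ::
  "nat \<Rightarrow> nat \<Rightarrow> (nat \<Rightarrow> nat \<Rightarrow> real) \<Rightarrow> real \<Rightarrow> ((nat \<Rightarrow> nat \<Rightarrow> real) \<Rightarrow> real)
     \<Rightarrow> (nat \<Rightarrow> nat \<Rightarrow> real) \<Rightarrow> bool" where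
  "is_solution N K p I0 f qs \<longleftrightarrow>
     qs \<in> Delta N K \<and> MI_X_YN N K p qs \<ge> I0 \<and>
     (\<forall>q\<in>Delta N K. MI_X_YN N K p q \<ge> I0 \<longrightarrow> f q \<le> f qs)"

end

theory Submission
  imports Defs "HOL-Real_Asymp.Real_Asymp"
begin

text \<open>If the constraint were slack at a solution \<open>q\<close>, mix \<open>q\<close> with the uniform quantizer,
  \<open>q\<^sub>t = (1 - t) q + t/N\<close>. Since \<open>I(X;Y\<^sub>N)\<close> is continuous along this segment, the constraint
  still holds for small \<open>t > 0\<close>. Joint convexity of \<open>a ln (a/b)\<close> (the log-sum inequality) gives
  \<open>I(Y;Y\<^sub>N)(q\<^sub>t) \<le> (1 - t) I(Y;Y\<^sub>N)(q)\<close> and \<open>H(Y\<^sub>N|Y)(q\<^sub>t) \<ge> (1 - t) H(Y\<^sub>N|Y)(q) + t ln N\<close>.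
  Both improvements are strict because \<open>I(Y;Y\<^sub>N) \<ge> I(X;Y\<^sub>N) > I\<^sub>0 > 0\<close> by data processing, and
  hence \<open>H(Y\<^sub>N|Y) = H(Y\<^sub>N) - I(Y;Y\<^sub>N) < ln N\<close>.\<close>

text \<open>The case split in \<open>xlog_def\<close> is redundant because \<open>ln 0 = 0\<close> in HOL; note also the junk
  value \<open>xlog a 0 = 0\<close>.\<close>

lemma xlog_altdef: "xlog a b = a * ln (a / b)"
  by (simp add: xlog_def)

lemma xlog_mult_left: "0 \<le> c \<Longrightarrow> xlog (c * a) (c * b) = c * xlog a b"
  by (cases "c = 0") (simp_all add: xlog_altdef)

lemma xlog_self: "xlog a a = 0"
  by (cases "a = 0") (simp_all add: xlog_altdef)

lemma xlog_antimono:
  assumes "0 \<le> a" "0 < b" "b \<le> b'"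
  shows "xlog a b' \<le> xlog a b"
proof (cases "a = 0")
  case False
  then have "ln (a / b') \<le> ln (a / b)"
    using assms by (intro ln_mono divide_left_mono) auto
  then show ?thesis
    using assms by (simp add: xlog_altdef mult_left_mono)
qed (simp add: xlog_altdef)

lemma xlog_eq_xlog_one_minus: "0 < a \<Longrightarrow> 0 < b \<Longrightarrow> xlog a b = xlog a 1 - a * ln b"
  by (simp add: xlog_altdef ln_div right_diff_distrib)

lemma log_sum_inequality_pos:
  fixes a b :: "'i \<Rightarrow> real"
  assumes "finite P" "P \<noteq> {}" and pos: "\<And>k. k \<in> P \<Longrightarrow> 0 < a k" "\<And>k. k \<in> P \<Longrightarrow> 0 < b k"
  shows "xlog (\<Sum>k\<in>P. a k) (\<Sum>k\<in>P. b k) \<le> (\<Sum>k\<in>P. xlog (a k) (b k))"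
proof -
  define A B where "A = (\<Sum>k\<in>P. a k)" and "B = (\<Sum>k\<in>P. b k)"
  have "0 < A" "0 < B"
    using assms unfolding A_def B_def by (auto intro!: sum_pos)
  \<comment> \<open>Gibbs: apply \<open>ln x \<le> x - 1\<close> to \<open>x = (A b\<^sub>k) / (B a\<^sub>k)\<close>.\<close>
  have "(\<Sum>k\<in>P. a k * ln (A * b k / (B * a k))) \<le> (\<Sum>k\<in>P. A / B * b k - a k)"
  proof (rule sum_mono)
    fix k assume "k \<in> P"
    then have "0 < a k" "0 < b k" using pos by auto
    then have "a k * ln (A * b k / (B * a k)) \<le> a k * (A * b k / (B * a k) - 1)"
      using \<open>0 < A\<close> \<open>0 < B\<close> by (intro mult_left_mono ln_le_minus_one) auto
    also have "\<dots> = A / B * b k - a k"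
      using \<open>0 < a k\<close> \<open>0 < B\<close> by (simp add: field_simps)
    finally show "a k * ln (A * b k / (B * a k)) \<le> A / B * b k - a k" .
  qed
  also have "\<dots> = A / B * B - A"
    by (simp only: sum_subtractf flip: sum_distrib_left) (simp add: A_def B_def)
  also have "\<dots> = 0"
    using \<open>0 < B\<close> by simp
  finally have gibbs: "(\<Sum>k\<in>P. a k * ln (A * b k / (B * a k))) \<le> 0" .
  have "(\<Sum>k\<in>P. a k * ln (A * b k / (B * a k))) = (\<Sum>k\<in>P. a k * ln (A / B) - xlog (a k) (b k))"
  proof (rule sum.cong [OF refl])
    fix k assume "k \<in> P"
    then have "0 < a k" "0 < b k" using pos by auto
    with \<open>0 < A\<close> \<open>0 < B\<close>
    show "a k * ln (A * b k / (B * a k)) = a k * ln (A / B) - xlog (a k) (b k)"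
      by (simp add: xlog_altdef ln_div ln_mult algebra_simps)
  qed
  also have "\<dots> = xlog A B - (\<Sum>k\<in>P. xlog (a k) (b k))"
    by (simp add: sum_subtractf xlog_altdef A_def flip: sum_distrib_right)
  finally show ?thesis
    using gibbs by (simp add: A_def B_def)
qed

lemma log_sum_inequality:
  fixes a b :: "'i \<Rightarrow> real"
  assumes "finite S"
    and a_nonneg: "\<And>k. k \<in> S \<Longrightarrow> 0 \<le> a k" and b_nonneg: "\<And>k. k \<in> S \<Longrightarrow> 0 \<le> b k"
    and "\<And>k. k \<in> S \<Longrightarrow> 0 < a k \<Longrightarrow> 0 < b k"
  shows "xlog (\<Sum>k\<in>S. a k) (\<Sum>k\<in>S. b k) \<le> (\<Sum>k\<in>S. xlog (a k) (b k))"
proof -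
  define P where "P = {k\<in>S. 0 < a k}"
  have P: "finite P" "P \<subseteq> S" "\<And>k. k \<in> P \<Longrightarrow> 0 < a k" "\<And>k. k \<in> P \<Longrightarrow> 0 < b k"
    using assms by (auto simp: P_def)
  have zero_outside_P: "a k = 0" if "k \<in> S - P" for k
    using that a_nonneg by (force simp: P_def)
  have sum_a: "(\<Sum>k\<in>S. a k) = (\<Sum>k\<in>P. a k)"
    using assms(1) P zero_outside_P by (intro sum.mono_neutral_right) auto
  have sum_xlog: "(\<Sum>k\<in>S. xlog (a k) (b k)) = (\<Sum>k\<in>P. xlog (a k) (b k))"
    using assms(1) P zero_outside_P by (intro sum.mono_neutral_right) (auto simp: xlog_altdef)
  show ?thesis
  proof (cases "P = {}")
    case True
    then show ?thesis by (simp add: sum_a sum_xlog) (simp add: xlog_def)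
  next
    case False
    then have "0 < (\<Sum>k\<in>P. b k)"
      using P by (intro sum_pos) auto
    then have "xlog (\<Sum>k\<in>S. a k) (\<Sum>k\<in>S. b k) \<le> xlog (\<Sum>k\<in>P. a k) (\<Sum>k\<in>P. b k)"
      using assms(1) P b_nonneg unfolding sum_a
      by (intro xlog_antimono sum_mono2 sum_nonneg) (auto intro: less_imp_le)
    also have "\<dots> \<le> (\<Sum>k\<in>P. xlog (a k) (b k))"
      using P False by (intro log_sum_inequality_pos)
    finally show ?thesis by (simp add: sum_xlog)
  qed
qed

lemma xlog_add_le:
  assumes "0 \<le> a" "0 \<le> b" "0 \<le> a'" "0 \<le> b'" "0 < a \<Longrightarrow> 0 < b" "0 < a' \<Longrightarrow> 0 < b'"
  shows "xlog (a + a') (b + b') \<le> xlog a b + xlog a' b'"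
proof -
  have "xlog (\<Sum>j\<in>UNIV. if j then a else a') (\<Sum>j\<in>UNIV. if j then b else b')
      \<le> (\<Sum>j\<in>UNIV. xlog (if j then a else a') (if j then b else b'))"
    by (rule log_sum_inequality) (use assms in auto)
  then show ?thesis by (simp add: UNIV_bool ac_simps)
qed

lemma xlog_convex:
  assumes "0 \<le> a" "0 \<le> b" "0 \<le> a'" "0 \<le> b'" "0 < a \<Longrightarrow> 0 < b" "0 < a' \<Longrightarrow> 0 < b'"
    and "0 \<le> t" "t \<le> 1"
  shows "xlog ((1-t) * a + t * a') ((1-t) * b + t * b') \<le> (1-t) * xlog a b + t * xlog a' b'"
proof -
  have "xlog ((1-t) * a + t * a') ((1-t) * b + t * b') \<le> xlog ((1-t) * a) ((1-t) * b) + xlog (t * a') (t * b')"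
    using assms by (intro xlog_add_le) (auto simp: zero_less_mult_iff)
  also have "\<dots> = (1-t) * xlog a b + t * xlog a' b'"
    using assms by (simp add: xlog_mult_left)
  finally show ?thesis .
qed

lemma tendsto_xlog_segment:
  assumes "0 \<le> a" "0 \<le> b" "0 \<le> a'" "0 \<le> b'" "0 < a \<Longrightarrow> 0 < b" "0 < a' \<Longrightarrow> 0 < b'"
  shows "((\<lambda>t. xlog ((1-t) * a + t * a') ((1-t) * b + t * b')) \<longlongrightarrow> xlog a b) (at_right 0)"
proof (cases "0 < a")
  case True
  with assms have "((\<lambda>t. ((1-t) * a + t * a') * ln (((1-t) * a + t * a') / ((1-t) * b + t * b')))
      \<longlongrightarrow> ((1-0) * a + 0 * a') * ln (((1-0) * a + 0 * a') / ((1-0) * b + 0 * b'))) (at_right 0)"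
    by (intro tendsto_intros) auto
  then show ?thesis by (simp add: xlog_altdef)
next
  case False
  with assms have "a = 0" by simp
  consider "a' = 0" | "0 < a'" "0 < b'" "b = 0" | "0 < a'" "0 < b'" "0 < b"
    using assms by fastforce
  then show ?thesis
  proof cases
    case 2
    then show ?thesis unfolding xlog_altdef \<open>a = 0\<close> \<open>b = 0\<close> by real_asymp
  next
    case 3
    then show ?thesis using \<open>a = 0\<close> by (simp add: xlog_altdef) real_asymp
  qed (simp add: \<open>a = 0\<close> xlog_altdef)
qed

lemma sum_xlog_one_ge_minus_ln_card:
  fixes a :: "'i \<Rightarrow> real"
  assumes "finite S" "\<And>k. k \<in> S \<Longrightarrow> 0 \<le> a k" "(\<Sum>k\<in>S. a k) = 1"
  shows "- ln (card S) \<le> (\<Sum>k\<in>S. xlog (a k) 1)"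
proof -
  have "0 < card S"
    using assms by (metis card_gt_0_iff sum.empty zero_neq_one)
  have shift: "xlog (a k) (1 / card S) = xlog (a k) 1 + a k * ln (card S)" if "k \<in> S" for k
    using assms(2)[OF that] \<open>0 < card S\<close>
    by (cases "a k = 0") (simp_all add: xlog_altdef ln_mult distrib_left)
  have "0 = xlog (\<Sum>k\<in>S. a k) (\<Sum>k\<in>S. 1 / real (card S))"
    using \<open>0 < card S\<close> assms(3) by (simp add: xlog_altdef)
  also have "\<dots> \<le> (\<Sum>k\<in>S. xlog (a k) (1 / card S))"
    using assms \<open>0 < card S\<close> by (intro log_sum_inequality) auto
  also have "\<dots> = (\<Sum>k\<in>S. xlog (a k) 1) + ln (card S)"
    using assms(3) by (simp add: shift sum.distrib flip: sum_distrib_right)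
  finally show ?thesis by simp
qed

lemma joint_dist_nonneg: "is_joint_dist K p \<Longrightarrow> i \<in> {1..K} \<Longrightarrow> k \<in> {1..K} \<Longrightarrow> 0 \<le> p i k"
  by (simp add: is_joint_dist_def)

lemma joint_dist_K_pos: "is_joint_dist K p \<Longrightarrow> 0 < K"
  by (rule ccontr) (simp add: is_joint_dist_def)

lemma Delta_nonneg: "q \<in> Delta N K \<Longrightarrow> \<nu> \<in> {1..N} \<Longrightarrow> k \<in> {1..K} \<Longrightarrow> 0 \<le> q \<nu> k"
  by (simp add: Delta_def)

lemma Delta_sum: "q \<in> Delta N K \<Longrightarrow> k \<in> {1..K} \<Longrightarrow> (\<Sum>\<nu>=1..N. q \<nu> k) = 1"
  by (simp add: Delta_def)

lemma Delta_N_pos: "q \<in> Delta N K \<Longrightarrow> 0 < K \<Longrightarrow> 0 < N"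
  using Delta_sum[of q N K 1] by (cases "N = 0") auto

lemma pX_nonneg: "is_joint_dist K p \<Longrightarrow> i \<in> {1..K} \<Longrightarrow> 0 \<le> pX K p i"
  unfolding pX_def by (intro sum_nonneg) (simp add: joint_dist_nonneg)

lemma pY_nonneg: "is_joint_dist K p \<Longrightarrow> k \<in> {1..K} \<Longrightarrow> 0 \<le> pY K p k"
  unfolding pY_def by (intro sum_nonneg) (simp add: joint_dist_nonneg)

lemma sum_pY: "is_joint_dist K p \<Longrightarrow> (\<Sum>k=1..K. pY K p k) = 1"
  unfolding pY_def is_joint_dist_def using sum.swap[of "\<lambda>i k. p i k" "{1..K}" "{1..K}"] by simp

lemma joint_le_pX: "is_joint_dist K p \<Longrightarrow> i \<in> {1..K} \<Longrightarrow> k \<in> {1..K} \<Longrightarrow> p i k \<le> pX K p i"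
  unfolding pX_def by (rule member_le_sum) (simp_all add: joint_dist_nonneg)

lemma joint_le_pY: "is_joint_dist K p \<Longrightarrow> i \<in> {1..K} \<Longrightarrow> k \<in> {1..K} \<Longrightarrow> p i k \<le> pY K p k"
  unfolding pY_def by (rule member_le_sum[where f = "\<lambda>i. p i k"]) (simp_all add: joint_dist_nonneg)

lemma pYN_nonneg:
  "is_joint_dist K p \<Longrightarrow> q \<in> Delta N K \<Longrightarrow> \<nu> \<in> {1..N} \<Longrightarrow> 0 \<le> pYN K p q \<nu>"
  unfolding pYN_def by (intro sum_nonneg mult_nonneg_nonneg) (simp_all add: Delta_nonneg pY_nonneg)

lemma pXYN_nonneg:
  "is_joint_dist K p \<Longrightarrow> q \<in> Delta N K \<Longrightarrow> \<nu> \<in> {1..N} \<Longrightarrow> i \<in> {1..K} \<Longrightarrow> 0 \<le> pXYN K p q i \<nu>"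
  unfolding pXYN_def by (intro sum_nonneg mult_nonneg_nonneg) (simp_all add: Delta_nonneg joint_dist_nonneg)

lemma sum_pYN:
  assumes jd: "is_joint_dist K p" and q: "q \<in> Delta N K"
  shows "(\<Sum>\<nu>=1..N. pYN K p q \<nu>) = 1"
proof -
  have "(\<Sum>\<nu>=1..N. pYN K p q \<nu>) = (\<Sum>k=1..K. pY K p k * (\<Sum>\<nu>=1..N. q \<nu> k))"
    unfolding pYN_def by (subst sum.swap) (simp add: sum_distrib_left mult.commute)
  also have "\<dots> = 1"
    using Delta_sum[OF q] sum_pY[OF jd] by simp
  finally show ?thesis .
qed

lemma pYN_pos:
  assumes "is_joint_dist K p" "q \<in> Delta N K" "\<nu> \<in> {1..N}" "k \<in> {1..K}" "0 < q \<nu> k * pY K p k"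
  shows "0 < pYN K p q \<nu>"
proof -
  have "q \<nu> k * pY K p k \<le> pYN K p q \<nu>"
    unfolding pYN_def using assms
    by (intro member_le_sum[where f = "\<lambda>k. q \<nu> k * pY K p k"]) (simp_all add: Delta_nonneg pY_nonneg)
  with assms(5) show ?thesis by simp
qed

lemma pX_pYN_pos:
  assumes jd: "is_joint_dist K p" and q: "q \<in> Delta N K" and "\<nu> \<in> {1..N}" "i \<in> {1..K}"
    and "0 < pXYN K p q i \<nu>"
  shows "0 < pX K p i * pYN K p q \<nu>"
proof -
  have "\<exists>k\<in>{1..K}. 0 < q \<nu> k * p i k"
  proof (rule ccontr)
    assume "\<not> ?thesis"
    then have "pXYN K p q i \<nu> \<le> 0"
      unfolding pXYN_def by (intro sum_nonpos) (auto simp: not_less)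
    with assms(5) show False by simp
  qed
  then obtain k where k: "k \<in> {1..K}" "0 < q \<nu> k * p i k" ..
  have "0 \<le> q \<nu> k" "0 \<le> p i k"
    using Delta_nonneg[OF q \<open>\<nu> \<in> _\<close> k(1)] joint_dist_nonneg[OF jd \<open>i \<in> _\<close> k(1)] .
  with k(2) have "0 < q \<nu> k" "0 < p i k"
    by (auto simp: zero_less_mult_iff)
  then have "0 < pX K p i" "0 < q \<nu> k * pY K p k"
    using joint_le_pX[OF jd \<open>i \<in> _\<close> k(1)] joint_le_pY[OF jd \<open>i \<in> _\<close> k(1)] by auto
  then show ?thesis
    using pYN_pos[OF jd q \<open>\<nu> \<in> _\<close> k(1)] by simp
qed

lemma MI_Y_YN_altdef:
  assumes "is_joint_dist K p"
  shows "MI_Y_YN N K p q = (\<Sum>k=1..K. \<Sum>\<nu>=1..N. pY K p k * xlog (q \<nu> k) (pYN K p q \<nu>))"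
  unfolding MI_Y_YN_def
proof (intro sum.cong refl)
  fix k \<nu> assume "k \<in> {1..K}"
  then show "xlog (q \<nu> k * pY K p k) (pY K p k * pYN K p q \<nu>) = pY K p k * xlog (q \<nu> k) (pYN K p q \<nu>)"
    using xlog_mult_left[OF pY_nonneg[OF assms], of k "q \<nu> k" "pYN K p q \<nu>"] by (simp add: ac_simps)
qed

lemma data_processing_inequality:
  assumes jd: "is_joint_dist K p" and q: "q \<in> Delta N K"
  shows "MI_X_YN N K p q \<le> MI_Y_YN N K p q"
proof -
  have "MI_X_YN N K p q \<le> (\<Sum>i=1..K. \<Sum>\<nu>=1..N. \<Sum>k=1..K. xlog (p i k * q \<nu> k) (p i k * pYN K p q \<nu>))"
    unfolding MI_X_YN_def
  proof (intro sum_mono)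
    fix i \<nu> assume i: "i \<in> {1..K}" and \<nu>: "\<nu> \<in> {1..N}"
    have "pX K p i * pYN K p q \<nu> = (\<Sum>k=1..K. p i k * pYN K p q \<nu>)"
      unfolding pX_def by (simp add: sum_distrib_right)
    moreover have "xlog (\<Sum>k=1..K. p i k * q \<nu> k) (\<Sum>k=1..K. p i k * pYN K p q \<nu>)
        \<le> (\<Sum>k=1..K. xlog (p i k * q \<nu> k) (p i k * pYN K p q \<nu>))"
    proof (rule log_sum_inequality)
      fix k assume k: "k \<in> {1..K}"
      then have "0 \<le> q \<nu> k" "0 \<le> p i k"
        using i \<nu> jd q by (simp_all add: Delta_nonneg joint_dist_nonneg)
      then show "0 \<le> p i k * q \<nu> k" "0 \<le> p i k * pYN K p q \<nu>"
        using \<nu> jd q by (simp_all add: pYN_nonneg)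
      assume "0 < p i k * q \<nu> k"
      then have "0 < p i k" "0 < q \<nu> k * pY K p k"
        using \<open>0 \<le> q \<nu> k\<close> \<open>0 \<le> p i k\<close> joint_le_pY[OF jd i k]
        by (auto simp: zero_less_mult_iff)
      then show "0 < p i k * pYN K p q \<nu>"
        using pYN_pos[OF jd q \<nu> k] by simp
    qed simp
    ultimately show "xlog (pXYN K p q i \<nu>) (pX K p i * pYN K p q \<nu>)
        \<le> (\<Sum>k=1..K. xlog (p i k * q \<nu> k) (p i k * pYN K p q \<nu>))"
      by (simp add: pXYN_def mult.commute)
  qed
  also have "\<dots> = (\<Sum>i=1..K. \<Sum>\<nu>=1..N. \<Sum>k=1..K. p i k * xlog (q \<nu> k) (pYN K p q \<nu>))"
    using joint_dist_nonneg[OF jd] by (intro sum.cong refl xlog_mult_left) auto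
  also have "\<dots> = (\<Sum>k=1..K. \<Sum>\<nu>=1..N. pY K p k * xlog (q \<nu> k) (pYN K p q \<nu>))"
    unfolding pY_def sum_distrib_right
    by (subst sum.swap) (subst (2) sum.swap, subst sum.swap, rule refl)
  also have "\<dots> = MI_Y_YN N K p q"
    by (simp add: MI_Y_YN_altdef jd)
  finally show ?thesis .
qed

definition H_YN :: "nat \<Rightarrow> nat \<Rightarrow> (nat \<Rightarrow> nat \<Rightarrow> real) \<Rightarrow> (nat \<Rightarrow> nat \<Rightarrow> real) \<Rightarrow> real" where
  "H_YN N K p q = - (\<Sum>\<nu>=1..N. xlog (pYN K p q \<nu>) 1)"

lemma H_YN_le_ln_N:
  assumes "is_joint_dist K p" "q \<in> Delta N K"
  shows "H_YN N K p q \<le> ln N"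
  using sum_xlog_one_ge_minus_ln_card[of "{1..N}" "pYN K p q"] pYN_nonneg[OF assms] sum_pYN[OF assms]
  by (simp add: H_YN_def)

lemma MI_Y_YN_chain_rule:
  assumes jd: "is_joint_dist K p" and q: "q \<in> Delta N K"
  shows "MI_Y_YN N K p q = H_YN N K p q - CondH_YN_Y N K p q"
proof -
  have "MI_Y_YN N K p q = (\<Sum>k=1..K. \<Sum>\<nu>=1..N. pY K p k * xlog (q \<nu> k) 1 - q \<nu> k * pY K p k * ln (pYN K p q \<nu>))"
    unfolding MI_Y_YN_altdef[OF jd]
  proof (intro sum.cong refl)
    fix k \<nu> assume k: "k \<in> {1..K}" and \<nu>: "\<nu> \<in> {1..N}"
    show "pY K p k * xlog (q \<nu> k) (pYN K p q \<nu>) = pY K p k * xlog (q \<nu> k) 1 - q \<nu> k * pY K p k * ln (pYN K p q \<nu>)"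
    proof (cases "0 < q \<nu> k * pY K p k")
      case True
      then have pos: "0 < q \<nu> k" "0 < pYN K p q \<nu>"
        using pYN_pos[OF jd q \<nu> k] Delta_nonneg[OF q \<nu> k] pY_nonneg[OF jd k]
        by (auto simp: zero_less_mult_iff)
      show ?thesis by (simp add: xlog_eq_xlog_one_minus[OF pos] algebra_simps)
    next
      case False
      then have "q \<nu> k = 0 \<or> pY K p k = 0"
        using Delta_nonneg[OF q \<nu> k] pY_nonneg[OF jd k] by (auto simp: zero_less_mult_iff)
      then show ?thesis by (auto simp: xlog_altdef)
    qed
  qed
  also have "\<dots> = - CondH_YN_Y N K p q - (\<Sum>\<nu>=1..N. \<Sum>k=1..K. q \<nu> k * pY K p k * ln (pYN K p q \<nu>))"
    unfolding CondH_YN_Y_def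
    by (simp add: sum_subtractf sum_distrib_left sum.swap[of "\<lambda>k \<nu>. q \<nu> k * pY K p k * ln (pYN K p q \<nu>)"])
  also have "\<dots> = - CondH_YN_Y N K p q - (\<Sum>\<nu>=1..N. pYN K p q \<nu> * ln (pYN K p q \<nu>))"
    by (simp add: pYN_def sum_distrib_right)
  also have "\<dots> = H_YN N K p q - CondH_YN_Y N K p q"
    by (simp add: H_YN_def xlog_altdef)
  finally show ?thesis .
qed

definition mix_uniform :: "nat \<Rightarrow> real \<Rightarrow> (nat \<Rightarrow> nat \<Rightarrow> real) \<Rightarrow> nat \<Rightarrow> nat \<Rightarrow> real" where
  "mix_uniform N t q = (\<lambda>\<nu> k. (1 - t) * q \<nu> k + t * (1 / real N))"

lemma mix_uniform_in_Delta:
  assumes "q \<in> Delta N K" "0 < N" "0 \<le> t" "t \<le> 1"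
  shows "mix_uniform N t q \<in> Delta N K"
  using assms unfolding Delta_def mix_uniform_def
  by (auto simp: sum.distrib intro!: add_nonneg_nonneg mult_nonneg_nonneg simp flip: sum_distrib_left)

lemma pYN_mix_uniform:
  assumes "is_joint_dist K p"
  shows "pYN K p (mix_uniform N t q) \<nu> = (1 - t) * pYN K p q \<nu> + t * (1 / real N)"
proof -
  have "pYN K p (mix_uniform N t q) \<nu> = (\<Sum>k=1..K. (1 - t) * (q \<nu> k * pY K p k) + t / real N * pY K p k)"
    unfolding pYN_def mix_uniform_def by (intro sum.cong refl) (simp add: algebra_simps)
  also have "\<dots> = (1 - t) * pYN K p q \<nu> + t / real N * (\<Sum>k=1..K. pY K p k)"
    unfolding pYN_def by (simp add: sum.distrib sum_distrib_left)
  finally show ?thesis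
    using sum_pY[OF assms] by simp
qed

lemma pXYN_mix_uniform:
  "pXYN K p (mix_uniform N t q) i \<nu> = (1 - t) * pXYN K p q i \<nu> + t * (pX K p i / real N)"
proof -
  have "pXYN K p (mix_uniform N t q) i \<nu> = (\<Sum>k=1..K. (1 - t) * (q \<nu> k * p i k) + t / real N * p i k)"
    unfolding pXYN_def mix_uniform_def by (intro sum.cong refl) (simp add: algebra_simps)
  also have "\<dots> = (1 - t) * pXYN K p q i \<nu> + t / real N * pX K p i"
    unfolding pXYN_def pX_def by (simp add: sum.distrib sum_distrib_left)
  finally show ?thesis by simp
qed

lemma MI_Y_YN_mix_uniform_le:
  assumes jd: "is_joint_dist K p" and q: "q \<in> Delta N K" and "0 < N" "0 \<le> t" "t \<le> 1"
  shows "MI_Y_YN N K p (mix_uniform N t q) \<le> (1 - t) * MI_Y_YN N K p q"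
proof -
  have "MI_Y_YN N K p (mix_uniform N t q) = (\<Sum>k=1..K. \<Sum>\<nu>=1..N.
      xlog ((1 - t) * (q \<nu> k * pY K p k) + t * (pY K p k / real N))
           ((1 - t) * (pY K p k * pYN K p q \<nu>) + t * (pY K p k / real N)))"
    unfolding MI_Y_YN_def pYN_mix_uniform[OF jd]
    by (intro sum.cong refl) (simp add: mix_uniform_def algebra_simps)
  also have "\<dots> \<le> (\<Sum>k=1..K. \<Sum>\<nu>=1..N. (1 - t) * xlog (q \<nu> k * pY K p k) (pY K p k * pYN K p q \<nu>)
      + t * xlog (pY K p k / real N) (pY K p k / real N))"
  proof (intro sum_mono xlog_convex)
    fix k \<nu> assume k: "k \<in> {1..K}" and \<nu>: "\<nu> \<in> {1..N}"
    show "0 \<le> q \<nu> k * pY K p k" "0 \<le> pY K p k * pYN K p q \<nu>" "0 \<le> pY K p k / real N"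
      using Delta_nonneg[OF q \<nu> k] pY_nonneg[OF jd k] pYN_nonneg[OF jd q \<nu>] by simp_all
    show "0 < pY K p k * pYN K p q \<nu>" if "0 < q \<nu> k * pY K p k"
      using that pYN_pos[OF jd q \<nu> k] Delta_nonneg[OF q \<nu> k] pY_nonneg[OF jd k]
      by (auto simp: zero_less_mult_iff)
  qed (use assms pY_nonneg[OF jd] in auto)
  also have "\<dots> = (1 - t) * MI_Y_YN N K p q"
    by (simp add: MI_Y_YN_def xlog_self sum_distrib_left)
  finally show ?thesis .
qed

lemma CondH_YN_Y_mix_uniform_ge:
  assumes jd: "is_joint_dist K p" and q: "q \<in> Delta N K" and "0 < N" "0 \<le> t" "t \<le> 1"
  shows "(1 - t) * CondH_YN_Y N K p q + t * ln N \<le> CondH_YN_Y N K p (mix_uniform N t q)"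
proof -
  have "(\<Sum>\<nu>=1..N. xlog (mix_uniform N t q \<nu> k) 1) \<le> (1 - t) * (\<Sum>\<nu>=1..N. xlog (q \<nu> k) 1) - t * ln N"
    if k: "k \<in> {1..K}" for k
  proof -
    have "(\<Sum>\<nu>=1..N. xlog (mix_uniform N t q \<nu> k) 1)
        \<le> (\<Sum>\<nu>=1..N. (1 - t) * xlog (q \<nu> k) 1 + t * xlog (1 / real N) 1)"
    proof (rule sum_mono)
      fix \<nu> assume \<nu>: "\<nu> \<in> {1..N}"
      have "xlog ((1 - t) * q \<nu> k + t * (1 / real N)) ((1 - t) * 1 + t * 1)
          \<le> (1 - t) * xlog (q \<nu> k) 1 + t * xlog (1 / real N) 1"
        using assms Delta_nonneg[OF q \<nu> k] by (intro xlog_convex) auto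
      then show "xlog (mix_uniform N t q \<nu> k) 1 \<le> (1 - t) * xlog (q \<nu> k) 1 + t * xlog (1 / real N) 1"
        by (simp add: mix_uniform_def)
    qed
    also have "\<dots> = (1 - t) * (\<Sum>\<nu>=1..N. xlog (q \<nu> k) 1) - t * ln N"
      using \<open>0 < N\<close> by (simp add: xlog_altdef sum.distrib sum_subtractf sum_distrib_left ln_div)
    finally show ?thesis .
  qed
  then have "(\<Sum>k=1..K. pY K p k * (\<Sum>\<nu>=1..N. xlog (mix_uniform N t q \<nu> k) 1))
      \<le> (\<Sum>k=1..K. pY K p k * ((1 - t) * (\<Sum>\<nu>=1..N. xlog (q \<nu> k) 1) - t * ln N))"
    by (intro sum_mono mult_left_mono) (simp_all add: pY_nonneg jd)
  also have "\<dots> = (\<Sum>k=1..K. (1 - t) * (pY K p k * (\<Sum>\<nu>=1..N. xlog (q \<nu> k) 1)) - t * ln N * pY K p k)"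
    by (intro sum.cong refl) (simp add: algebra_simps)
  also have "\<dots> = (1 - t) * (\<Sum>k=1..K. pY K p k * (\<Sum>\<nu>=1..N. xlog (q \<nu> k) 1)) - t * ln N * (\<Sum>k=1..K. pY K p k)"
    by (simp only: sum_subtractf sum_distrib_left)
  finally show ?thesis
    using sum_pY[OF jd] by (simp add: CondH_YN_Y_def)
qed

lemma tendsto_MI_X_YN_mix_uniform:
  assumes jd: "is_joint_dist K p" and q: "q \<in> Delta N K"
  shows "((\<lambda>t. MI_X_YN N K p (mix_uniform N t q)) \<longlongrightarrow> MI_X_YN N K p q) (at_right 0)"
  unfolding MI_X_YN_def
proof (intro tendsto_sum)
  fix i \<nu> assume i: "i \<in> {1..K}" and \<nu>: "\<nu> \<in> {1..N}"
  have "((\<lambda>t. xlog ((1 - t) * pXYN K p q i \<nu> + t * (pX K p i / real N))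
           ((1 - t) * (pX K p i * pYN K p q \<nu>) + t * (pX K p i / real N)))
        \<longlongrightarrow> xlog (pXYN K p q i \<nu>) (pX K p i * pYN K p q \<nu>)) (at_right 0)"
    using pX_pYN_pos[OF jd q \<nu> i] pXYN_nonneg[OF jd q \<nu> i] pX_nonneg[OF jd i] pYN_nonneg[OF jd q \<nu>]
    by (intro tendsto_xlog_segment) auto
  then show "((\<lambda>t. xlog (pXYN K p (mix_uniform N t q) i \<nu>) (pX K p i * pYN K p (mix_uniform N t q) \<nu>))
        \<longlongrightarrow> xlog (pXYN K p q i \<nu>) (pX K p i * pYN K p q \<nu>)) (at_right 0)"
    by (simp add: pXYN_mix_uniform pYN_mix_uniform[OF jd] algebra_simps)
qed

lemma MI_Y_YN_mix_uniform_less: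
  assumes "is_joint_dist K p" "q \<in> Delta N K" "0 < N" "0 < MI_Y_YN N K p q" "0 < t" "t \<le> 1"
  shows "MI_Y_YN N K p (mix_uniform N t q) < MI_Y_YN N K p q"
proof -
  have "MI_Y_YN N K p (mix_uniform N t q) \<le> (1 - t) * MI_Y_YN N K p q"
    using assms by (intro MI_Y_YN_mix_uniform_le) auto
  also have "\<dots> < MI_Y_YN N K p q"
    using mult_pos_pos[OF assms(5,4)] by (simp add: algebra_simps)
  finally show ?thesis .
qed

lemma CondH_YN_Y_mix_uniform_greater:
  assumes jd: "is_joint_dist K p" and q: "q \<in> Delta N K" and "0 < N" "0 < MI_Y_YN N K p q" "0 < t" "t \<le> 1"
  shows "CondH_YN_Y N K p q < CondH_YN_Y N K p (mix_uniform N t q)"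
proof -
  have "CondH_YN_Y N K p q < ln N"
    using MI_Y_YN_chain_rule[OF jd q] H_YN_le_ln_N[OF jd q] assms(4) by simp
  then have "CondH_YN_Y N K p q < (1 - t) * CondH_YN_Y N K p q + t * ln N"
    using assms(5) by (simp add: algebra_simps)
  also have "\<dots> \<le> CondH_YN_Y N K p (mix_uniform N t q)"
    using CondH_YN_Y_mix_uniform_ge assms by simp
  finally show ?thesis .
qed

lemma is_solution_constraint_tight:
  assumes jd: "is_joint_dist K p" and "0 < I0"
    and sol: "is_solution N K p I0 f qs"
    and improves: "\<And>q t. q \<in> Delta N K \<Longrightarrow> 0 < N \<Longrightarrow> 0 < MI_Y_YN N K p q \<Longrightarrow> 0 < t \<Longrightarrow> t \<le> 1
       \<Longrightarrow> f q < f (mix_uniform N t q)"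
  shows "MI_X_YN N K p qs = I0"
proof (rule ccontr)
  assume "MI_X_YN N K p qs \<noteq> I0"
  with sol have slack: "I0 < MI_X_YN N K p qs" and qs: "qs \<in> Delta N K"
    by (auto simp: is_solution_def)
  have N: "0 < N"
    using Delta_N_pos[OF qs joint_dist_K_pos[OF jd]] .
  have MI_Y: "0 < MI_Y_YN N K p qs"
    using data_processing_inequality[OF jd qs] slack \<open>0 < I0\<close> by simp
  have "\<forall>\<^sub>F t in at_right 0. t \<in> {0<..<1::real}"
    by (rule eventually_at_right_real) simp
  with order_tendstoD(1)[OF tendsto_MI_X_YN_mix_uniform[OF jd qs] slack]
  have "\<forall>\<^sub>F t in at_right 0. I0 < MI_X_YN N K p (mix_uniform N t qs) \<and> t \<in> {0<..<1}"
    by (rule eventually_conj)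
  then obtain t where t: "I0 < MI_X_YN N K p (mix_uniform N t qs)" "0 < t" "t < 1"
    using eventually_happens[of _ "at_right (0::real)"] by auto
  then have "f (mix_uniform N t qs) \<le> f qs"
    using sol mix_uniform_in_Delta[OF qs N] by (auto simp: is_solution_def)
  with improves[OF qs N MI_Y t(2)] t(3) show False by simp
qed

theorem mainTheorem1:
  fixes N K :: nat and p :: "nat \<Rightarrow> nat \<Rightarrow> real" and I0 :: real
  assumes "is_joint_dist K p"
    and "I0 > 0"
  shows "(\<forall>qs. is_solution N K p I0 (\<lambda>q. - MI_Y_YN N K p q) qs \<longrightarrow> MI_X_YN N K p qs = I0)
       \<and> (\<forall>qs. is_solution N K p I0 (\<lambda>q. CondH_YN_Y N K p q) qs \<longrightarrow> MI_X_YN N K p qs = I0)"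
proof (intro conjI allI impI)
  fix qs assume "is_solution N K p I0 (\<lambda>q. - MI_Y_YN N K p q) qs"
  then show "MI_X_YN N K p qs = I0"
    by (rule is_solution_constraint_tight[OF assms]) (simp add: MI_Y_YN_mix_uniform_less assms(1))
next
  fix qs assume "is_solution N K p I0 (\<lambda>q. CondH_YN_Y N K p q) qs"
  then show "MI_X_YN N K p qs = I0"
    by (rule is_solution_constraint_tight[OF assms]) (simp add: CondH_YN_Y_mix_uniform_greater assms(1))
qed

end
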